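(* Let $M$ be a set of $m\ge1$ sources and $N$ a set of $n$ sinks, let $\mathbf{d}:M\to\mathbb{Z}_{\ge0}$ satisfy $n = 1+\sum_{\mu}\mathbf{d}(\mu)$, and let $P_{\mathbf{d}}$ be the transportation polytope with supply $\mathbf{m}(\mu)=1+m\,\mathbf{d}(\mu)$ for $\mu\in M$ and demand $\mathbf{n}(\nu)=m$ for $\nu\in N$. Then the map $x\mapsto \operatorname{supp}(x)$ is a bijection from the vertex set of $P_{\mathbf{d}}$ to $\mathcal{T}_{\mathbf{d}}$, and two vertices of $P_{\mathbf{d}}$ are adjacent in the $1$-skeleton of $P_{\mathbf{d}}$ if and only if their supports are adjacent in the pivoting graph $\mathcal{G}_{\mathbf{d}}$ (so the $1$-skeleton of $P_{\mathbf{d}}$ is isomorphic to $\mathcal{G}_{\mathbf{d}}$ via this map).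
   Context: For supply $\mathbf{m}:M\to\mathbb{R}_{\ge0}$ and demand $\mathbf{n}:N\to\mathbb{R}_{\ge0}$ with equal totals, the transportation polytope is $P_{\mathbf{m},\mathbf{n}}=\{x\in\mathbb{R}_{\ge0}^{M\times N} : \sum_\nu x_{\mu,\nu}=\mathbf{m}(\mu)\ \forall\mu,\ \sum_\mu x_{\mu,\nu}=\mathbf{n}(\nu)\ \forall\nu\}$. The support $\operatorname{supp}(x)$ is the subgraph of $K_{M,N}$ consisting of edges $(\mu,\nu)$ with $x_{\mu,\nu}>0$. $\mathcal{T}_{\mathbf{d}}$ is the set of spanning trees of $K_{M,N}$ in which each source $\mu$ has degree exactly $1+\mathbf{d}(\mu)$. Pivoting: for $T\in\mathcal{T}_{\mathbf{d}}$ and an edge $\varepsilon\notin T$, let $\varepsilon'$ be the other edge, incident to the source endpoint of $\varepsilon$, of the unique cycle in $T\cup\{\varepsilon\}$; then $(T\setminus\{\varepsilon'\})\cup\{\varepsilon\}$ is obtained by pivoting. $\mathcal{G}_{\mathbf{d}}$ is the graph on $\mathcal{T}_{\mathbf{d}}$ whose edges are pairs of trees related by a pivot. *)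

theory Defs
  imports "HOL-Analysis.Analysis"
begin

text \<open>Sources are the elements of a finite type 'm (M = UNIV), sinks the elements of a
finite type 'n (N = UNIV). A subgraph is given by its edge set E :: ('m \<times> 'n) set.\<close>

definition edge_ends :: "'m \<times> 'n \<Rightarrow> ('m + 'n) set" where
  "edge_ends e = {Inl (fst e), Inr (snd e)}"

definition adjrel :: "('m \<times> 'n) set \<Rightarrow> (('m + 'n) \<times> ('m + 'n)) set" where
  "adjrel E = {(u, v). \<exists>e\<in>E. edge_ends e = {u, v}}"

definition is_cycle :: "('m \<times> 'n) set \<Rightarrow> ('m + 'n) list \<Rightarrow> bool" where
  "is_cycle E vs \<longleftrightarrow> length vs \<ge> 3 \<and> distinct vs \<and>
     (\<forall>i < length vs. (vs ! i, vs ! ((i + 1) mod length vs)) \<in> adjrel E)"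

definition cycle_edges :: "('m \<times> 'n) set \<Rightarrow> ('m + 'n) list \<Rightarrow> ('m \<times> 'n) set" where
  "cycle_edges E vs = {e \<in> E. \<exists>i < length vs. edge_ends e = {vs ! i, vs ! ((i + 1) mod length vs)}}"

definition connected_graph :: "('m \<times> 'n) set \<Rightarrow> bool" where
  "connected_graph E \<longleftrightarrow> (\<forall>u v. (u, v) \<in> (adjrel E)\<^sup>*)"

definition acyclic_graph :: "('m \<times> 'n) set \<Rightarrow> bool" where
  "acyclic_graph E \<longleftrightarrow> (\<nexists>vs. is_cycle E vs)"

text \<open>Spanning tree of K_{M,N} (all vertices of 'm + 'n are vertices of the subgraph).\<close>
definition spanning_tree :: "('m::finite \<times> 'n::finite) set \<Rightarrow> bool" where
  "spanning_tree T \<longleftrightarrow> connected_graph T \<and> acyclic_graph T"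

definition source_degree :: "('m \<times> 'n::finite) set \<Rightarrow> 'm \<Rightarrow> nat" where
  "source_degree T \<mu> = card {\<nu>. (\<mu>, \<nu>) \<in> T}"

definition trees_d :: "('m::finite \<Rightarrow> nat) \<Rightarrow> ('m \<times> 'n::finite) set set" where
  "trees_d d = {T. spanning_tree T \<and> (\<forall>\<mu>. source_degree T \<mu> = 1 + d \<mu>)}"

definition pivot :: "('m \<times> 'n) set \<Rightarrow> ('m \<times> 'n) set \<Rightarrow> bool" where
  "pivot T T' \<longleftrightarrow> (\<exists>\<epsilon> \<epsilon>' vs. \<epsilon> \<notin> T \<and> is_cycle (insert \<epsilon> T) vs \<and>
      \<epsilon> \<in> cycle_edges (insert \<epsilon> T) vs \<and> \<epsilon>' \<in> cycle_edges (insert \<epsilon> T) vs \<and>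
      \<epsilon>' \<noteq> \<epsilon> \<and> fst \<epsilon>' = fst \<epsilon> \<and> T' = insert \<epsilon> (T - {\<epsilon>'}))"

definition pivot_adj :: "('m::finite \<Rightarrow> nat) \<Rightarrow> ('m \<times> 'n::finite) set \<Rightarrow> ('m \<times> 'n) set \<Rightarrow> bool" where
  "pivot_adj d T T' \<longleftrightarrow> T \<in> trees_d d \<and> T' \<in> trees_d d \<and> (pivot T T' \<or> pivot T' T)"

definition transport_polytope ::
  "('m::finite \<Rightarrow> real) \<Rightarrow> ('n::finite \<Rightarrow> real) \<Rightarrow> (real ^ ('m \<times> 'n)) set" where
  "transport_polytope supply demand = {x. (\<forall>\<mu> \<nu>. x $ (\<mu>, \<nu>) \<ge> 0) \<and>
      (\<forall>\<mu>. (\<Sum>\<nu>\<in>UNIV. x $ (\<mu>, \<nu>)) = supply \<mu>) \<and> (\<forall>\<nu>. (\<Sum>\<mu>\<in>UNIV. x $ (\<mu>, \<nu>)) = demand \<nu>)}"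

definition P_d :: "('m::finite \<Rightarrow> nat) \<Rightarrow> (real ^ ('m \<times> 'n::finite)) set" where
  "P_d d = transport_polytope (\<lambda>\<mu>. 1 + real CARD('m) * real (d \<mu>)) (\<lambda>\<nu>. real CARD('m))"

definition supp :: "real ^ ('m::finite \<times> 'n::finite) \<Rightarrow> ('m \<times> 'n) set" where
  "supp x = {e. x $ e > 0}"

definition vertices :: "'a::real_vector set \<Rightarrow> 'a set" where
  "vertices P = {x. x extreme_point_of P}"

definition skeleton_adj :: "'a::euclidean_space set \<Rightarrow> 'a \<Rightarrow> 'a \<Rightarrow> bool" where
  "skeleton_adj P x y \<longleftrightarrow> x \<in> vertices P \<and> y \<in> vertices P \<and> x \<noteq> y \<and>
     (\<exists>F. F face_of P \<and> aff_dim F = 1 \<and> x \<in> F \<and> y \<in> F)"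

end

theory Submission
  imports Defs "HOL-Library.Transitive_Closure_Table"
begin

text \<open>A point of \<open>P_d\<close> is a nonnegative matrix with prescribed row and column sums, its
  marginals. Call an edge set circulation-free if no nonzero matrix supported on it has zero
  marginals. This means being a forest: the support of a circulation has no leaf, hence contains
  a cycle; and a rank count shows that a circulation-free set of edges inside a vertex set \<open>K\<close> has
  fewer than \<open>card K\<close> edges, which a cycle violates. As in every transportation polytope, \<open>x\<close>
  is a vertex iff \<open>supp x\<close> is circulation-free, and the support determines the vertex.

  For \<open>P_d\<close>, with supplies \<open>1 + m d \<mu>\<close> and demands \<open>m\<close>, counting modulo \<open>m\<close> shows that every
  component of a support graph contains all sources, so supports are connected; and source
  \<open>\<mu>\<close> carries more than \<open>d \<mu>\<close> edges because all entries are at most \<open>m\<close>. Counting edges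
  then makes the support of a vertex a tree in \<open>trees_d d\<close>. Conversely, the marginal equations on a tree
  \<open>T\<close> in \<open>trees_d d\<close> have a unique solution, and it is positive: cutting \<open>T\<close> at \<open>(\<mu>, \<nu>)\<close> gives
  \<open>m\<close> minus the number of sources on the side of \<open>\<nu>\<close> as the entry at \<open>(\<mu>, \<nu>)\<close>.

  Two vertices span an edge of \<open>P_d\<close> iff their supports differ by exchanging a single edge, and
  among trees in \<open>trees_d d\<close> such exchanges are exactly pivots: equal source degrees force the two
  exchanged edges to share their source, and they lie on the cycle created by the added edge.\<close>

section \<open>Cycles in bipartite edge sets\<close>

lemma edge_ends_eq_iff: "edge_ends e = edge_ends e' \<longleftrightarrow> e = e'"
  by (cases e; cases e') (auto simp: edge_ends_def doubleton_eq_iff)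

lemma edge_ends_other:
  assumes "w \<in> edge_ends e"
  obtains u where "u \<noteq> w" "edge_ends e = {w, u}"
  using assms by (cases e) (auto simp: edge_ends_def)

lemma adjrel_iff: "(u, v) \<in> adjrel E \<longleftrightarrow>
   (\<exists>a b. (a, b) \<in> E \<and> ((u = Inl a \<and> v = Inr b) \<or> (u = Inr b \<and> v = Inl a)))"
  by (auto simp: adjrel_def edge_ends_def doubleton_eq_iff) (metis fst_conv snd_conv)+

lemma adjrel_sym: "(u, v) \<in> adjrel E \<Longrightarrow> (v, u) \<in> adjrel E"
  by (auto simp: adjrel_iff)

lemma adjrel_mono: "E \<subseteq> E' \<Longrightarrow> adjrel E \<subseteq> adjrel E'"
  by (auto simp: adjrel_def)

lemma is_cycle_mono: "is_cycle E vs \<Longrightarrow> E \<subseteq> E' \<Longrightarrow> is_cycle E' vs"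
  unfolding is_cycle_def using adjrel_mono by blast

lemma cycle_edges_subset: "cycle_edges E vs \<subseteq> E"
  by (auto simp: cycle_edges_def)

lemma cycle_edges_mono: "e \<in> cycle_edges E vs \<Longrightarrow> e \<in> E' \<Longrightarrow> e \<in> cycle_edges E' vs"
  by (auto simp: cycle_edges_def)

lemma is_cycle_cycle_edges: "is_cycle E vs \<Longrightarrow> is_cycle (cycle_edges E vs) vs"
  unfolding is_cycle_def adjrel_def cycle_edges_def by fastforce

lemma is_cycle_intro:
  assumes "3 \<le> length vs" "distinct vs" "successively (\<lambda>u v. (u, v) \<in> adjrel E) vs"
    "(last vs, hd vs) \<in> adjrel E"
  shows "is_cycle E vs"
  unfolding is_cycle_def
proof (intro conjI allI impI)
  fix i assume i: "i < length vs"
  show "(vs ! i, vs ! ((i + 1) mod length vs)) \<in> adjrel E"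
  proof (cases "Suc i < length vs")
    case True
    then show ?thesis using successively_nth[OF assms(3) True] by simp
  next
    case False
    then have "i = length vs - 1" using i by simp
    moreover have "vs \<noteq> []" using assms(1) by auto
    ultimately show ?thesis using assms(4) i by (simp add: last_conv_nth hd_conv_nth)
  qed
qed (use assms in auto)

definition degree :: "('m \<times> 'n) set \<Rightarrow> 'm + 'n \<Rightarrow> nat" where
  "degree E v = card {e \<in> E. v \<in> edge_ends e}"

definition is_path :: "('m \<times> 'n) set \<Rightarrow> ('m + 'n) list \<Rightarrow> bool" where
  "is_path E ps \<longleftrightarrow> distinct ps \<and> 2 \<le> length ps \<and> successively (\<lambda>u v. (u, v) \<in> adjrel E) ps"

lemma is_path_extend_or_cycle:
  assumes p: "is_path E ps" and deg: "degree E (last ps) \<noteq> 1"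
  shows "(\<exists>u. is_path E (ps @ [u])) \<or> (\<exists>vs. is_cycle E vs)"
proof -
  obtain xs w' w where ps: "ps = xs @ [w', w]"
    using p unfolding is_path_def
    by (cases ps rule: rev_exhaust; cases "butlast ps" rule: rev_exhaust) auto
  have "(w', w) \<in> adjrel E"
    using p by (simp add: is_path_def ps successively_append_iff)
  then obtain e1 where e1: "e1 \<in> E" "edge_ends e1 = {w', w}"
    by (auto simp: adjrel_def)
  have "{e \<in> E. w \<in> edge_ends e} \<noteq> {e1}"
    using deg by (auto simp: degree_def ps)
  then obtain e2 where e2: "e2 \<in> E" "w \<in> edge_ends e2" "e2 \<noteq> e1"
    using e1 by blast
  obtain u where u: "u \<noteq> w" "edge_ends e2 = {w, u}"
    using e2(2) by (rule edge_ends_other)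
  have wu: "(w, u) \<in> adjrel E"
    using e2 u by (auto simp: adjrel_def)
  have "u \<noteq> w'"
    using e1 e2 u edge_ends_eq_iff by (metis insert_commute)
  show ?thesis
  proof (cases "u \<in> set ps")
    case False
    then have "is_path E (ps @ [u])"
      using p wu by (auto simp: is_path_def ps successively_append_iff)
    then show ?thesis by blast
  next
    case True
    then have "u \<in> set xs"
      using \<open>u \<noteq> w\<close> \<open>u \<noteq> w'\<close> by (simp add: ps)
    then obtain ys zs where xs: "xs = ys @ u # zs"
      by (meson split_list)
    have "is_cycle E (u # zs @ [w', w])"
      by (rule is_cycle_intro)
        (use p wu in \<open>simp_all add: is_path_def ps xs successively_append_iff\<close>)
    then show ?thesis by blast
  qed
qed

lemma cycle_if_no_leaf:
  fixes E :: "('m::finite \<times> 'n::finite) set"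
  assumes "E \<noteq> {}" and no_leaf: "\<And>v. degree E v \<noteq> 1"
  shows "\<exists>vs. is_cycle E vs"
proof (rule ccontr)
  assume acyclic: "\<nexists>vs. is_cycle E vs"
  obtain a b where "(a, b) \<in> E"
    using assms(1) by auto
  then have edge: "is_path E [Inl a, Inr b]"
    by (auto simp: is_path_def adjrel_iff)
  have "\<exists>ps. is_path E ps \<and> k \<le> length ps" for k
  proof (induction k)
    case 0
    then show ?case using edge by blast
  next
    case (Suc k)
    then obtain ps where "is_path E ps" "k \<le> length ps"
      by blast
    then show ?case
      using is_path_extend_or_cycle[of E ps] no_leaf acyclic by fastforce
  qed
  then obtain ps where ps: "is_path E ps" "CARD('m + 'n) < length ps"
    by (meson Suc_le_eq)
  have "length ps = card (set ps)"
    using ps(1) by (simp add: is_path_def distinct_card)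
  also have "\<dots> \<le> CARD('m + 'n)"
    by (rule card_mono) auto
  finally show False
    using ps(2) by simp
qed

lemma rtrancl_path_successively:
  "rtrancl_path r x xs y \<Longrightarrow> successively r (x # xs) \<and> last (x # xs) = y"
  by (induction rule: rtrancl_path.induct) auto

lemma acyclic_Diff_edge_disconnects:
  assumes acyclic: "acyclic_graph T" and e: "(\<mu>, \<nu>) \<in> T"
  shows "(Inr \<nu>, Inl \<mu>) \<notin> (adjrel (T - {(\<mu>, \<nu>)}))\<^sup>*"
proof
  let ?R = "\<lambda>u v. (u, v) \<in> adjrel (T - {(\<mu>, \<nu>)})"
  assume "(Inr \<nu>, Inl \<mu>) \<in> (adjrel (T - {(\<mu>, \<nu>)}))\<^sup>*"
  then have "?R\<^sup>*\<^sup>* (Inr \<nu>) (Inl \<mu>)"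
    by (simp add: rtranclp_rtrancl_eq)
  then obtain xs where "rtrancl_path ?R (Inr \<nu>) xs (Inl \<mu>)"
    by (auto simp: rtranclp_eq_rtrancl_path)
  then obtain ws where ws: "rtrancl_path ?R (Inr \<nu>) ws (Inl \<mu>)" "distinct (Inr \<nu> # ws)"
    by (rule rtrancl_path_distinct)
  then have walk: "successively ?R (Inr \<nu> # ws)" "last (Inr \<nu> # ws) = Inl \<mu>"
    using rtrancl_path_successively by fast+
  have "ws \<noteq> []" "ws \<noteq> [Inl \<mu>]"
    using walk by (auto simp: adjrel_iff)
  then have "3 \<le> length (Inr \<nu> # ws)"
    using walk(2) by (cases ws rule: rev_exhaust) (auto simp: Suc_le_eq)
  moreover have "successively (\<lambda>u v. (u, v) \<in> adjrel T) (Inr \<nu> # ws)"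
    using walk(1) by (rule successively_mono) (use adjrel_mono[of "T - {(\<mu>, \<nu>)}" T] in blast)
  moreover have "(last (Inr \<nu> # ws), hd (Inr \<nu> # ws)) \<in> adjrel T"
    using walk(2) e by (auto simp: adjrel_iff)
  ultimately have "is_cycle T (Inr \<nu> # ws)"
    by (rule is_cycle_intro[OF _ ws(2)])
  then show False
    using acyclic by (auto simp: acyclic_graph_def)
qed

lemma cycle_through_added_edge:
  assumes "is_cycle E vs" "E \<subseteq> insert e S" "acyclic_graph S"
  shows "e \<in> cycle_edges E vs"
proof (rule ccontr)
  assume "e \<notin> cycle_edges E vs"
  then have "cycle_edges E vs \<subseteq> S"
    using assms(2) cycle_edges_subset by blast
  then have "is_cycle S vs"
    using is_cycle_cycle_edges[OF assms(1)] is_cycle_mono by blast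
  then show False
    using assms(3) by (simp add: acyclic_graph_def)
qed

lemma card_eq_sum_source_degree:
  "card (T :: ('m::finite \<times> 'n::finite) set) = (\<Sum>\<mu>\<in>UNIV. source_degree T \<mu>)"
proof -
  have "T = Sigma UNIV (\<lambda>\<mu>. {\<nu>. (\<mu>, \<nu>) \<in> T})"
    by auto
  then show ?thesis
    unfolding source_degree_def by (metis card_SigmaI finite)
qed

section \<open>Circulations\<close>

definition marginals :: "real^('m::finite \<times> 'n::finite) \<Rightarrow> real^('m + 'n)" where
  "marginals x = (\<chi> v. case v of Inl \<mu> \<Rightarrow> \<Sum>\<nu>\<in>UNIV. x$(\<mu>, \<nu>) | Inr \<nu> \<Rightarrow> \<Sum>\<mu>\<in>UNIV. x$(\<mu>, \<nu>))"

definition nonzeros :: "real^'a::finite \<Rightarrow> 'a set" where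
  "nonzeros c = {e. c$e \<noteq> 0}"

text \<open>Equivalently, the incidence vectors of the edges in \<open>S\<close> are linearly independent.\<close>

definition circulation_free :: "('m::finite \<times> 'n::finite) set \<Rightarrow> bool" where
  "circulation_free S \<longleftrightarrow> (\<forall>c. marginals c = 0 \<and> nonzeros c \<subseteq> S \<longrightarrow> c = 0)"

definition balanced :: "(real^('m::finite + 'n::finite)) set" where
  "balanced = {w. (\<Sum>\<mu>\<in>UNIV. w$Inl \<mu>) = (\<Sum>\<nu>\<in>UNIV. w$Inr \<nu>)}"

lemma marginals_Inl [simp]: "marginals x $ Inl \<mu> = (\<Sum>\<nu>\<in>UNIV. x$(\<mu>, \<nu>))"
  by (simp add: marginals_def)

lemma marginals_Inr [simp]: "marginals x $ Inr \<nu> = (\<Sum>\<mu>\<in>UNIV. x$(\<mu>, \<nu>))"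
  by (simp add: marginals_def)

lemma linear_marginals: "linear marginals"
  by (rule linearI) (auto simp: vec_eq_iff marginals_def sum.distrib sum_distrib_left split: sum.split)

lemma marginals_balanced: "marginals x \<in> balanced"
  unfolding balanced_def using sum.swap[of "\<lambda>\<mu> \<nu>. x$(\<mu>, \<nu>)" UNIV UNIV] by simp

lemma subspace_balanced: "subspace balanced"
  unfolding subspace_def balanced_def by (auto simp: sum.distrib simp flip: sum_distrib_left)

lemma span_balanced [simp]: "span balanced = balanced"
  using subspace_balanced by (simp add: span_eq_iff)

lemma axis_not_balanced: "axis k 1 \<notin> balanced"
  by (cases k) (auto simp: balanced_def axis_def)

lemma nonzeros_axis: "nonzeros (axis k (1::real)) = {k}"
  by (auto simp: nonzeros_def axis_def)

lemma nonzeros_diff: "nonzeros (a - b) \<subseteq> nonzeros a \<union> nonzeros b"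
  by (auto simp: nonzeros_def)

lemma nonzeros_scaleR: "nonzeros (r *\<^sub>R c) \<subseteq> nonzeros c"
  by (auto simp: nonzeros_def)

lemma subspace_supported: "subspace {z::real^'a::finite. nonzeros z \<subseteq> S}"
  unfolding subspace_def nonzeros_def by auto (metis (mono_tags) add_0 mem_Collect_eq subsetD)

lemma span_supported [simp]: "span {z::real^'a::finite. nonzeros z \<subseteq> S} = {z. nonzeros z \<subseteq> S}"
  using subspace_supported by (simp add: span_eq_iff)

lemma dim_supported: "dim {z::real^'a::finite. nonzeros z \<subseteq> S} = card S"
proof -
  have "{z::real^'a. nonzeros z \<subseteq> S} = {x. \<forall>i. i \<notin> S \<longrightarrow> x$i = 0}"
    by (auto simp: nonzeros_def)
  then show ?thesis
    using dim_substandard_cart[of S, where 'a=real] by (simp add: dim_vec_eq)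
qed

lemma circulation_free_mono: "circulation_free S' \<Longrightarrow> S \<subseteq> S' \<Longrightarrow> circulation_free S"
  unfolding circulation_free_def by blast

lemma circulation_free_eqI:
  assumes "circulation_free S" "marginals a = marginals b" "nonzeros (a - b) \<subseteq> S"
  shows "a = b"
proof -
  have "marginals (a - b) = 0"
    using assms(2) by (simp add: linear_diff[OF linear_marginals])
  then have "a - b = 0"
    using assms(1,3) unfolding circulation_free_def by blast
  then show ?thesis
    by simp
qed

lemma inj_on_marginals:
  assumes "circulation_free S"
  shows "inj_on marginals {z. nonzeros z \<subseteq> S}"
  using circulation_free_eqI[OF assms] nonzeros_diff by (intro inj_onI) blast

lemma dim_marginals_supported:
  assumes "circulation_free S"
  shows "dim (marginals ` {z. nonzeros z \<subseteq> S}) = card S"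
proof -
  have "inj_on marginals (span {z. nonzeros z \<subseteq> S})"
    using inj_on_marginals[OF assms] by simp
  then show ?thesis
    using dim_image_eq[OF linear_marginals] dim_supported by metis
qed

text \<open>On matrices supported on a circulation-free \<open>S\<close>, the marginals are injective with values in
  the balanced vectors supported on \<open>K\<close>, a proper subspace of the vectors supported on \<open>K\<close>.\<close>

lemma circulation_free_card_less:
  fixes S :: "('m::finite \<times> 'n::finite) set"
  assumes "K \<noteq> {}" and ends: "\<And>e. e \<in> S \<Longrightarrow> edge_ends e \<subseteq> K" and "circulation_free S"
  shows "card S < card K"
proof -
  let ?V = "{z::real^('m \<times> 'n). nonzeros z \<subseteq> S}"
  let ?W = "{w::real^('m + 'n). nonzeros w \<subseteq> K}"
  have "marginals ` ?V \<subseteq> balanced \<inter> ?W"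
  proof clarify
    fix z :: "real^('m \<times> 'n)" assume z: "nonzeros z \<subseteq> S"
    have "z$(\<mu>, \<nu>) = 0" if "Inl \<mu> \<notin> K \<or> Inr \<nu> \<notin> K" for \<mu> \<nu>
      using that z ends[of "(\<mu>, \<nu>)"] by (auto simp: nonzeros_def edge_ends_def)
    then have "marginals z $ v = 0" if "v \<notin> K" for v
      using that by (cases v) auto
    then show "marginals z \<in> balanced \<inter> ?W"
      using marginals_balanced by (auto simp: nonzeros_def)
  qed
  then have "card S \<le> dim (balanced \<inter> ?W)"
    using dim_subset dim_marginals_supported[OF assms(3)] by metis
  also have "\<dots> < dim ?W"
  proof (rule dim_psubset)
    obtain k where "k \<in> K"
      using assms(1) by auto
    then have "axis k 1 \<in> ?W - balanced"
      using axis_not_balanced by (auto simp: nonzeros_axis)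
    then have "balanced \<inter> ?W \<subset> ?W"
      by blast
    moreover have "span (balanced \<inter> ?W) = balanced \<inter> ?W"
      using subspace_inter[OF subspace_balanced subspace_supported] by (simp only: span_eq_iff)
    ultimately show "span (balanced \<inter> ?W) \<subset> span ?W"
      by (simp del: span_eq_iff)
  qed
  also have "\<dots> = card K"
    by (rule dim_supported)
  finally show ?thesis .
qed

lemma circulation_free_card_less_CARD:
  fixes S :: "('m::finite \<times> 'n::finite) set"
  assumes "circulation_free S"
  shows "card S < CARD('m + 'n)"
  by (rule circulation_free_card_less[OF _ _ assms]) auto

lemma circulation_free_marginals_onto:
  fixes T :: "('m::finite \<times> 'n::finite) set"
  assumes "circulation_free T" and "card T + 1 = CARD('m + 'n)" and "w \<in> balanced"
  obtains z where "nonzeros z \<subseteq> T" "marginals z = w"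
proof -
  let ?V = "{z::real^('m \<times> 'n). nonzeros z \<subseteq> T}"
  have "dim (balanced :: (real^('m + 'n)) set) < dim (UNIV :: (real^('m + 'n)) set)"
    using axis_not_balanced[of undefined] by (intro dim_psubset) auto
  then have "dim (balanced :: (real^('m + 'n)) set) \<le> dim (marginals ` ?V)"
    using assms(2) dim_marginals_supported[OF assms(1)] by simp
  then have "span (marginals ` ?V) = span balanced"
    using marginals_balanced by (intro dim_eq_span) auto
  moreover have "span (marginals ` ?V) = marginals ` ?V"
    using linear_subspace_image[OF linear_marginals subspace_supported] by (simp only: span_eq_iff)
  ultimately have "marginals ` ?V = balanced"
    by simp
  then have "w \<in> marginals ` ?V"
    using assms(3) by simp
  then obtain z where "z \<in> ?V" "marginals z = w"
    by blast
  then show ?thesis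
    using that by simp
qed

lemma degree_circulation_ne_1:
  assumes "marginals c = 0"
  shows "degree (nonzeros c) v \<noteq> 1"
proof
  assume "degree (nonzeros c) v = 1"
  then obtain e0 where e0: "{e \<in> nonzeros c. v \<in> edge_ends e} = {e0}"
    unfolding degree_def by (meson card_1_singletonE)
  obtain \<mu> \<nu> where e0_def: "e0 = (\<mu>, \<nu>)"
    by fastforce
  have "e0 \<in> {e \<in> nonzeros c. v \<in> edge_ends e}"
    using e0 by blast
  then have c0: "c$(\<mu>, \<nu>) \<noteq> 0" and v: "v = Inl \<mu> \<or> v = Inr \<nu>"
    by (auto simp: nonzeros_def edge_ends_def e0_def)
  have only: "e = e0" if "c$e \<noteq> 0" "v \<in> edge_ends e" for e
    using e0 that by (auto simp: nonzeros_def)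
  show False
    using v
  proof
    assume v: "v = Inl \<mu>"
    have "(\<Sum>\<nu>'\<in>UNIV. c$(\<mu>, \<nu>')) = (\<Sum>\<nu>'\<in>{\<nu>}. c$(\<mu>, \<nu>'))"
      by (rule sum.mono_neutral_right) (use only in \<open>auto simp: v e0_def edge_ends_def\<close>)
    then have "marginals c $ Inl \<mu> = c$(\<mu>, \<nu>)"
      by simp
    then show False
      using assms c0 by simp
  next
    assume v: "v = Inr \<nu>"
    have "(\<Sum>\<mu>'\<in>UNIV. c$(\<mu>', \<nu>)) = (\<Sum>\<mu>'\<in>{\<mu>}. c$(\<mu>', \<nu>))"
      by (rule sum.mono_neutral_right) (use only in \<open>auto simp: v e0_def edge_ends_def\<close>)
    then have "marginals c $ Inr \<nu> = c$(\<mu>, \<nu>)"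
      by simp
    then show False
      using assms c0 by simp
  qed
qed

lemma circulation_has_cycle:
  assumes "marginals c = 0" and "c \<noteq> 0"
  shows "\<exists>vs. is_cycle (nonzeros c) vs"
proof (rule cycle_if_no_leaf)
  show "nonzeros c \<noteq> {}"
    using assms(2) by (auto simp: nonzeros_def vec_eq_iff)
qed (rule degree_circulation_ne_1[OF assms(1)])

lemma acyclic_imp_circulation_free:
  assumes "acyclic_graph S"
  shows "circulation_free S"
  unfolding circulation_free_def
proof (intro allI impI)
  fix c assume c: "marginals c = 0 \<and> nonzeros c \<subseteq> S"
  show "c = 0"
  proof (rule ccontr)
    assume "c \<noteq> 0"
    then obtain vs where "is_cycle (nonzeros c) vs"
      using circulation_has_cycle c by blast
    then have "is_cycle S vs"
      using c is_cycle_mono by blast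
    then show False
      using assms by (simp add: acyclic_graph_def)
  qed
qed

lemma cycle_edges_card_ge:
  fixes E :: "('m::finite \<times> 'n::finite) set"
  assumes "is_cycle E vs"
  shows "length vs \<le> card (cycle_edges E vs)"
proof -
  let ?L = "length vs"
  let ?ends = "\<lambda>i. {vs ! i, vs ! (Suc i mod ?L)}"
  have L: "3 \<le> ?L" and dist: "distinct vs"
    using assms by (auto simp: is_cycle_def)
  have idx: "vs ! a = vs ! b \<longleftrightarrow> a = b" if "a < ?L" "b < ?L" for a b
    using dist that by (simp add: nth_eq_iff_index_eq)
  have mod_less: "Suc k mod ?L < ?L" for k
    using L by (intro mod_less_divisor) linarith
  have succ_mod: "Suc i mod ?L = (if Suc i = ?L then 0 else Suc i)" if "i < ?L" for i
    using that by (cases "Suc i = ?L") auto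
  have "inj_on ?ends {..<?L}"
  proof (rule inj_onI)
    fix i j assume "i \<in> {..<?L}" "j \<in> {..<?L}" and eq: "?ends i = ?ends j"
    then have i: "i < ?L" and j: "j < ?L"
      by auto
    then have "i = j \<or> (i = Suc j mod ?L \<and> Suc i mod ?L = j)"
      using eq L unfolding doubleton_eq_iff by (simp add: idx mod_less) blast
    then show "i = j"
      using L succ_mod[OF i] succ_mod[OF j] by (cases "Suc i = ?L"; cases "Suc j = ?L") auto
  qed
  then have "?L = card (?ends ` {..<?L})"
    by (simp add: card_image)
  also have "\<dots> \<le> card (edge_ends ` cycle_edges E vs)"
  proof (rule card_mono)
    show "?ends ` {..<?L} \<subseteq> edge_ends ` cycle_edges E vs"
    proof clarify
      fix i assume "i < ?L"
      then obtain e where "e \<in> E" "edge_ends e = ?ends i"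
        using assms by (auto simp: is_cycle_def adjrel_def)
      then show "?ends i \<in> edge_ends ` cycle_edges E vs"
        using \<open>i < ?L\<close> by (auto simp: cycle_edges_def)
    qed
  qed simp
  also have "\<dots> \<le> card (cycle_edges E vs)"
    by (rule card_image_le) simp
  finally show ?thesis .
qed

lemma cycle_imp_not_circulation_free:
  fixes S :: "('m::finite \<times> 'n::finite) set"
  assumes cycle: "is_cycle S vs"
  shows "\<not> circulation_free S"
proof
  assume "circulation_free S"
  then have "circulation_free (cycle_edges S vs)"
    using cycle_edges_subset circulation_free_mono by blast
  moreover have "edge_ends e \<subseteq> set vs" if "e \<in> cycle_edges S vs" for e
  proof -
    have "0 < length vs"
      using cycle by (auto simp: is_cycle_def)
    then have "Suc i mod length vs < length vs" for i
      by simp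
    then show ?thesis
      using that by (auto simp: cycle_edges_def)
  qed
  moreover have "set vs \<noteq> {}"
    using cycle by (auto simp: is_cycle_def)
  ultimately have "card (cycle_edges S vs) < card (set vs)"
    using circulation_free_card_less by blast
  moreover have "card (set vs) = length vs"
    using cycle by (simp add: is_cycle_def distinct_card)
  ultimately show False
    using cycle_edges_card_ge[OF cycle] by simp
qed

lemma acyclic_graph_iff_circulation_free:
  fixes S :: "('m::finite \<times> 'n::finite) set"
  shows "acyclic_graph S \<longleftrightarrow> circulation_free S"
  using acyclic_imp_circulation_free cycle_imp_not_circulation_free
  unfolding acyclic_graph_def by blast

lemma tree_Diff_edge_component_card:
  fixes T :: "('m::finite \<times> 'n::finite) set"
  assumes free: "circulation_free T" and card: "card T + 1 = CARD('m + 'n)" and e: "e \<in> T"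
    and closed: "\<And>p. p \<in> T - {e} \<Longrightarrow> Inl (fst p) \<in> C \<longleftrightarrow> Inr (snd p) \<in> C"
    and sides: "Inr (snd e) \<in> C" "Inl (fst e) \<notin> C"
  shows "card {p \<in> T. Inl (fst p) \<in> C} + 1 = card C"
proof -
  define EC where "EC = {p \<in> T. Inl (fst p) \<in> C}"
  define ED where "ED = {p \<in> T - {e}. Inl (fst p) \<notin> C}"
  have "e \<notin> EC" "e \<notin> ED" "EC \<inter> ED = {}" "T = insert e (EC \<union> ED)"
    using e sides by (auto simp: EC_def ED_def)
  then have "card T = Suc (card EC + card ED)"
    by (simp add: card_Un_disjoint)
  moreover have "card EC < card C"
  proof (rule circulation_free_card_less)
    show "edge_ends p \<subseteq> C" if "p \<in> EC" for p
    proof -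
      have "p \<in> T - {e}" "Inl (fst p) \<in> C"
        using that \<open>e \<notin> EC\<close> by (auto simp: EC_def)
      then show ?thesis
        using closed[of p] by (auto simp: edge_ends_def)
    qed
    show "circulation_free EC"
      using free by (rule circulation_free_mono) (auto simp: EC_def)
  qed (use sides in auto)
  moreover have "card ED < card (- C)"
  proof (rule circulation_free_card_less)
    show "edge_ends p \<subseteq> - C" if "p \<in> ED" for p
    proof -
      have "p \<in> T - {e}" "Inl (fst p) \<notin> C"
        using that by (auto simp: ED_def)
      then show ?thesis
        using closed[of p] by (auto simp: edge_ends_def)
    qed
    show "circulation_free ED"
      using free by (rule circulation_free_mono) (auto simp: ED_def)
  qed (use sides in auto)
  moreover have "card C + card (- C) = CARD('m + 'n)"
    using card_Un_disjoint[of C "- C"] by simp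
  ultimately show ?thesis
    using card by (simp add: EC_def)
qed

section \<open>Vertices and edges of transportation polytopes\<close>

definition margin_vector :: "('m::finite \<Rightarrow> real) \<Rightarrow> ('n::finite \<Rightarrow> real) \<Rightarrow> real^('m + 'n)" where
  "margin_vector s t = (\<chi> v. case v of Inl \<mu> \<Rightarrow> s \<mu> | Inr \<nu> \<Rightarrow> t \<nu>)"

lemma margin_vector_balanced:
  "margin_vector s t \<in> balanced \<longleftrightarrow> (\<Sum>\<mu>\<in>UNIV. s \<mu>) = (\<Sum>\<nu>\<in>UNIV. t \<nu>)"
  by (simp add: balanced_def margin_vector_def)

lemma marginals_eq_margin_vector:
  "marginals x = margin_vector s t \<longleftrightarrow>
     (\<forall>\<mu>. (\<Sum>\<nu>\<in>UNIV. x$(\<mu>, \<nu>)) = s \<mu>) \<and> (\<forall>\<nu>. (\<Sum>\<mu>\<in>UNIV. x$(\<mu>, \<nu>)) = t \<nu>)"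
  by (auto simp: vec_eq_iff margin_vector_def split: sum.split)

lemma transport_polytope_iff:
  "x \<in> transport_polytope s t \<longleftrightarrow> (\<forall>e. 0 \<le> x$e) \<and> marginals x = margin_vector s t"
  by (auto simp: transport_polytope_def marginals_eq_margin_vector)

lemma transport_polytope_nonneg: "x \<in> transport_polytope s t \<Longrightarrow> 0 \<le> x$e"
  unfolding transport_polytope_def by (cases e) auto

lemma transport_polytope_marginals:
  "x \<in> transport_polytope s t \<Longrightarrow> marginals x = margin_vector s t"
  by (simp add: transport_polytope_iff)

lemma supp_eq_nonzeros: "(\<And>e. 0 \<le> x$e) \<Longrightarrow> supp x = nonzeros x"
  by (auto simp: supp_def nonzeros_def less_le)

lemma margin_cut:
  assumes "marginals x = margin_vector s t"
  shows "(\<Sum>a\<in>A. s a) - (\<Sum>b\<in>B. t b) = (\<Sum>p\<in>A \<times> (- B). x$p) - (\<Sum>p\<in>(- A) \<times> B. x$p)"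
proof -
  have "(\<Sum>a\<in>A. s a) = (\<Sum>a\<in>A. \<Sum>b\<in>UNIV. x$(a, b))"
    using assms by (simp add: marginals_eq_margin_vector)
  also have "\<dots> = (\<Sum>p\<in>A \<times> UNIV. x$p)"
    by (simp add: sum.cartesian_product)
  also have "A \<times> UNIV = A \<times> B \<union> A \<times> (- B)"
    by auto
  also have "(\<Sum>p\<in>A \<times> B \<union> A \<times> (- B). x$p) = (\<Sum>p\<in>A \<times> B. x$p) + (\<Sum>p\<in>A \<times> (- B). x$p)"
    by (rule sum.union_disjoint) auto
  finally have rows: "(\<Sum>a\<in>A. s a) = (\<Sum>p\<in>A \<times> B. x$p) + (\<Sum>p\<in>A \<times> (- B). x$p)" .
  have "(\<Sum>b\<in>B. t b) = (\<Sum>b\<in>B. \<Sum>a\<in>UNIV. x$(a, b))"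
    using assms by (simp add: marginals_eq_margin_vector)
  also have "\<dots> = (\<Sum>p\<in>UNIV \<times> B. x$p)"
    by (subst sum.swap) (simp add: sum.cartesian_product)
  also have "UNIV \<times> B = A \<times> B \<union> (- A) \<times> B"
    by auto
  also have "(\<Sum>p\<in>A \<times> B \<union> (- A) \<times> B. x$p) = (\<Sum>p\<in>A \<times> B. x$p) + (\<Sum>p\<in>(- A) \<times> B. x$p)"
    by (rule sum.union_disjoint) auto
  finally show ?thesis
    using rows by simp
qed

lemma margin_cut_single_edge:
  assumes "marginals x = margin_vector s t" and "\<mu> \<notin> A" "\<nu> \<in> B"
    and cross: "\<And>a b. (a \<in> A \<longleftrightarrow> b \<notin> B) \<Longrightarrow> (a, b) \<noteq> (\<mu>, \<nu>) \<Longrightarrow> x$(a, b) = 0"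
  shows "x$(\<mu>, \<nu>) = (\<Sum>b\<in>B. t b) - (\<Sum>a\<in>A. s a)"
proof -
  have "(\<Sum>p\<in>A \<times> (- B). x$p) = 0"
    using cross \<open>\<mu> \<notin> A\<close> by (intro sum.neutral) auto
  moreover have "(\<Sum>p\<in>(- A) \<times> B. x$p) = (\<Sum>p\<in>{(\<mu>, \<nu>)}. x$p)"
    by (rule sum.mono_neutral_right) (use cross \<open>\<mu> \<notin> A\<close> \<open>\<nu> \<in> B\<close> in auto)
  ultimately show ?thesis
    using margin_cut[OF assms(1), of A B] by simp
qed

lemma convex_transport_polytope: "convex (transport_polytope s t)"
proof (rule convexI)
  fix x y :: "real^('a \<times> 'b)" and u v :: real
  assume "x \<in> transport_polytope s t" "y \<in> transport_polytope s t" "0 \<le> u" "0 \<le> v" "u + v = 1"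
  then show "u *\<^sub>R x + v *\<^sub>R y \<in> transport_polytope s t"
    by (simp add: transport_polytope_iff linear_add[OF linear_marginals]
        linear_scale[OF linear_marginals] flip: scaleR_add_left)
qed

lemma supp_convex_combination:
  assumes "0 \<le> a$e" "0 \<le> b$e" "0 \<le> u" "u \<le> 1"
  shows "e \<in> supp ((1 - u) *\<^sub>R a + u *\<^sub>R b) \<longleftrightarrow> (u < 1 \<and> e \<in> supp a) \<or> (0 < u \<and> e \<in> supp b)"
proof -
  have "0 \<le> (1 - u) * a$e" "0 \<le> u * b$e"
    using assms by simp_all
  then have "0 < (1 - u) * a$e + u * b$e \<longleftrightarrow> 0 < (1 - u) * a$e \<or> 0 < u * b$e"
    by linarith
  moreover have "0 < (1 - u) * a$e \<longleftrightarrow> u < 1 \<and> 0 < a$e" "0 < u * b$e \<longleftrightarrow> 0 < u \<and> 0 < b$e"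
    using assms by (auto simp: zero_less_mult_iff)
  ultimately show ?thesis
    by (simp add: supp_def)
qed

lemma supp_closed_segment:
  assumes "\<And>e. 0 \<le> a$e" "\<And>e. 0 \<le> b$e" "w \<in> closed_segment a b"
  shows "supp w \<subseteq> supp a \<union> supp b"
  using assms(3) supp_convex_combination[OF assms(1,2)] by (auto simp: in_segment)

lemma supp_open_segment:
  assumes "\<And>e. 0 \<le> a$e" "\<And>e. 0 \<le> b$e" "w \<in> open_segment a b"
  shows "supp w = supp a \<union> supp b"
  using assms(3) supp_convex_combination[OF assms(1,2)] by (auto simp: in_segment)

lemma in_open_segment_plus_minus:
  fixes q c :: "'a::real_vector"
  assumes "c \<noteq> 0" "0 < \<epsilon>"
  shows "q \<in> open_segment (q - \<epsilon> *\<^sub>R c) (q + \<epsilon> *\<^sub>R c)"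
proof -
  have "midpoint (q - \<epsilon> *\<^sub>R c) (q + \<epsilon> *\<^sub>R c) = q"
    by (metis add.left_commute diff_add_cancel midpoint_eq_iff)
  moreover have "q - \<epsilon> *\<^sub>R c \<noteq> q + \<epsilon> *\<^sub>R c"
    using assms by (metis cancel_ab_semigroup_add_class.diff_right_commute diff_add_cancel
        diff_self double_eq_0_iff less_numeral_extra(3) scaleR_eq_0_iff scaleR_left_distrib)
  ultimately show ?thesis
    using midpoint_in_open_segment[of "q - \<epsilon> *\<^sub>R c" "q + \<epsilon> *\<^sub>R c"] by simp
qed

lemma transport_polytope_perturb:
  assumes x: "x \<in> transport_polytope s t" and c: "marginals c = 0" "nonzeros c \<subseteq> supp x"
  obtains \<epsilon> where "0 < \<epsilon>" "x + \<epsilon> *\<^sub>R c \<in> transport_polytope s t"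
    "x - \<epsilon> *\<^sub>R c \<in> transport_polytope s t"
proof -
  define \<epsilon> where "\<epsilon> = Min (insert 1 ((\<lambda>e. x$e / \<bar>c$e\<bar>) ` nonzeros c))"
  have "0 < x$e / \<bar>c$e\<bar>" if "e \<in> nonzeros c" for e
    using that c(2) by (auto simp: nonzeros_def supp_def)
  then have "0 < \<epsilon>"
    unfolding \<epsilon>_def by (subst Min_gr_iff) auto
  have "\<epsilon> * \<bar>c$e\<bar> \<le> x$e" for e
  proof (cases "e \<in> nonzeros c")
    case True
    then have "\<epsilon> \<le> x$e / \<bar>c$e\<bar>"
      unfolding \<epsilon>_def by (intro Min_le) auto
    then show ?thesis
      using True by (simp add: nonzeros_def field_simps)
  next
    case False
    then show ?thesis
      using transport_polytope_nonneg[OF x] by (simp add: nonzeros_def)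
  qed
  then have bound: "\<bar>\<epsilon> * c$e\<bar> \<le> x$e" for e
    using \<open>0 < \<epsilon>\<close> by (simp add: abs_mult)
  have "0 \<le> x$e + \<epsilon> * c$e \<and> 0 \<le> x$e - \<epsilon> * c$e" for e
    using bound[of e] unfolding abs_le_iff by linarith
  moreover have "marginals (x + \<epsilon> *\<^sub>R c) = marginals x" "marginals (x - \<epsilon> *\<^sub>R c) = marginals x"
    using c(1) by (simp_all add: linear_add[OF linear_marginals] linear_diff[OF linear_marginals]
        linear_scale[OF linear_marginals])
  ultimately show ?thesis
    using that \<open>0 < \<epsilon>\<close> x by (simp add: transport_polytope_iff)
qed

lemma extreme_point_of_transport_polytope_iff:
  assumes x: "x \<in> transport_polytope s t"
  shows "x extreme_point_of transport_polytope s t \<longleftrightarrow> circulation_free (supp x)"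
proof
  assume extreme: "x extreme_point_of transport_polytope s t"
  show "circulation_free (supp x)"
    unfolding circulation_free_def
  proof (intro allI impI)
    fix c assume c: "marginals c = 0 \<and> nonzeros c \<subseteq> supp x"
    show "c = 0"
    proof (rule ccontr)
      assume "c \<noteq> 0"
      obtain \<epsilon> where "0 < \<epsilon>" "x + \<epsilon> *\<^sub>R c \<in> transport_polytope s t"
        "x - \<epsilon> *\<^sub>R c \<in> transport_polytope s t"
        using transport_polytope_perturb[OF x] c by blast
      then show False
        using extreme in_open_segment_plus_minus[OF \<open>c \<noteq> 0\<close>] unfolding extreme_point_of_def by blast
    qed
  qed
next
  assume free: "circulation_free (supp x)"
  show "x extreme_point_of transport_polytope s t"
    unfolding extreme_point_of_def
  proof (intro conjI ballI notI)
    fix a b assume a: "a \<in> transport_polytope s t" and b: "b \<in> transport_polytope s t"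
      and "x \<in> open_segment a b"
    then have "supp a \<subseteq> supp x" "supp b \<subseteq> supp x"
      using supp_open_segment transport_polytope_nonneg by blast+
    then have "nonzeros (b - a) \<subseteq> supp x"
      using nonzeros_diff[of b a] supp_eq_nonzeros transport_polytope_nonneg a b by blast
    then have "b = a"
      using circulation_free_eqI[OF free] transport_polytope_marginals a b by metis
    then show False
      using \<open>x \<in> open_segment a b\<close> by simp
  qed (rule x)
qed

lemma vertices_transport_polytope_iff:
  "x \<in> vertices (transport_polytope s t) \<longleftrightarrow> x \<in> transport_polytope s t \<and> circulation_free (supp x)"
  by (metis extreme_point_of_def extreme_point_of_transport_polytope_iff mem_Collect_eq vertices_def)

lemma inj_on_supp_vertices: "inj_on supp (vertices (transport_polytope s t))"
proof (rule inj_onI)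
  fix x y assume x: "x \<in> vertices (transport_polytope s t)"
    and y: "y \<in> vertices (transport_polytope s t)" and eq: "supp x = supp y"
  then have "nonzeros (y - x) \<subseteq> supp x"
    using nonzeros_diff[of y x] supp_eq_nonzeros transport_polytope_nonneg
    by (metis Un_absorb vertices_transport_polytope_iff)
  then show "x = y"
    using x y circulation_free_eqI transport_polytope_marginals
    by (metis vertices_transport_polytope_iff)
qed

text \<open>The affine combination of \<open>x\<close> and \<open>y\<close> that agrees with \<open>a\<close> at \<open>\<epsilon>\<close> differs from \<open>a\<close> only
  on the circulation-free set \<open>supp x\<close>, so it is \<open>a\<close>.\<close>

lemma transport_polytope_in_exchange_segment:
  assumes x: "x \<in> vertices (transport_polytope s t)" and y: "y \<in> transport_polytope s t"
    and eps: "\<epsilon> \<in> supp y" "\<epsilon> \<notin> supp x" and eps': "\<epsilon>' \<in> supp x" "\<epsilon>' \<notin> supp y"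
    and supp_y: "supp y \<subseteq> insert \<epsilon> (supp x)"
    and a: "a \<in> transport_polytope s t" and supp_a: "supp a \<subseteq> insert \<epsilon> (supp x)"
  shows "a \<in> closed_segment x y"
proof -
  have xP: "x \<in> transport_polytope s t" and free: "circulation_free (supp x)"
    using x by (simp_all add: vertices_transport_polytope_iff)
  note nonneg = transport_polytope_nonneg[OF xP] transport_polytope_nonneg[OF y]
    transport_polytope_nonneg[OF a]
  define \<tau> where "\<tau> = a$\<epsilon> / y$\<epsilon>"
  define w where "w = (1 - \<tau>) *\<^sub>R x + \<tau> *\<^sub>R y"
  have "x$\<epsilon> = 0" "0 < y$\<epsilon>"
    using eps nonneg[of \<epsilon>] by (auto simp: supp_def)
  have "marginals w = (1 - \<tau>) *\<^sub>R marginals x + \<tau> *\<^sub>R marginals y"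
    by (simp add: w_def linear_add[OF linear_marginals] linear_scale[OF linear_marginals])
  then have "marginals a = marginals w"
    using transport_polytope_marginals[OF xP] transport_polytope_marginals[OF y]
      transport_polytope_marginals[OF a]
    by (simp add: algebra_simps)
  moreover have "nonzeros (a - w) \<subseteq> supp x"
  proof
    fix e assume e: "e \<in> nonzeros (a - w)"
    have "e \<noteq> \<epsilon>"
      using e \<open>x$\<epsilon> = 0\<close> \<open>0 < y$\<epsilon>\<close> by (auto simp: nonzeros_def w_def \<tau>_def)
    moreover have "e \<in> insert \<epsilon> (supp x)"
    proof (rule ccontr)
      assume "e \<notin> insert \<epsilon> (supp x)"
      then have "e \<notin> supp a" "e \<notin> supp x" "e \<notin> supp y"
        using supp_a supp_y by auto
      then have "a$e = 0" "x$e = 0" "y$e = 0"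
        using nonneg[of e] by (simp_all add: supp_def)
      then show False
        using e by (simp add: nonzeros_def w_def)
    qed
    ultimately show "e \<in> supp x"
      by simp
  qed
  ultimately have "a = w"
    by (rule circulation_free_eqI[OF free])
  have "0 \<le> \<tau>"
    using nonneg[of \<epsilon>] by (simp add: \<tau>_def)
  moreover have "\<tau> \<le> 1"
  proof -
    have "0 \<le> (1 - \<tau>) * x$\<epsilon>'" "0 < x$\<epsilon>'"
      using \<open>a = w\<close> eps' nonneg[of \<epsilon>'] by (auto simp: w_def supp_def less_le)
    then show ?thesis
      by (simp add: zero_le_mult_iff)
  qed
  ultimately show ?thesis
    using \<open>a = w\<close> by (auto simp: in_segment w_def)
qed

lemma exchange_imp_skeleton_adj:
  assumes x: "x \<in> vertices (transport_polytope s t)" and y: "y \<in> vertices (transport_polytope s t)"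
    and "\<epsilon> \<notin> supp x" "\<epsilon>' \<in> supp x" "\<epsilon>' \<noteq> \<epsilon>" and supp_y: "supp y = insert \<epsilon> (supp x - {\<epsilon>'})"
  shows "skeleton_adj (transport_polytope s t) x y"
proof -
  let ?P = "transport_polytope s t"
  have xP: "x \<in> ?P" and yP: "y \<in> ?P"
    using x y by (simp_all add: vertices_transport_polytope_iff)
  note in_segment = transport_polytope_in_exchange_segment[OF x yP, of \<epsilon> \<epsilon>']
  have "x \<noteq> y"
    using assms(3) supp_y by auto
  have "closed_segment x y face_of ?P"
    unfolding face_of_def
  proof (intro conjI ballI impI)
    show "closed_segment x y \<subseteq> ?P"
      using convex_transport_polytope xP yP by (rule convex_contains_segment[THEN iffD1, rule_format])
    fix a b w assume a: "a \<in> ?P" and b: "b \<in> ?P" and "w \<in> closed_segment x y" "w \<in> open_segment a b"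
    then have "supp a \<union> supp b \<subseteq> insert \<epsilon> (supp x)"
      using supp_closed_segment[of x y w] supp_open_segment[of a b w] transport_polytope_nonneg xP yP
        supp_y by blast
    then show "a \<in> closed_segment x y" "b \<in> closed_segment x y"
      using in_segment a b assms(3-5) supp_y by auto
  qed (rule convex_closed_segment)
  moreover have "aff_dim (closed_segment x y) = 1"
    using \<open>x \<noteq> y\<close> by (simp add: segment_convex_hull aff_dim_convex_hull aff_dim_2)
  ultimately show ?thesis
    unfolding skeleton_adj_def using x y \<open>x \<noteq> y\<close> by blast
qed

lemma aff_dim_1_diff_parallel:
  fixes F :: "'a::euclidean_space set"
  assumes "aff_dim F = 1" "x \<in> F" "y \<in> F" "p \<in> F" "x \<noteq> y"
  obtains r where "p - x = r *\<^sub>R (y - x)"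
proof -
  have "collinear F"
    using assms(1) by (simp add: collinear_aff_dim)
  then obtain u where "\<forall>a\<in>F. \<forall>b\<in>F. \<exists>k. a - b = k *\<^sub>R u"
    unfolding collinear_def by blast
  then obtain k1 k2 where k1: "y - x = k1 *\<^sub>R u" and k2: "p - x = k2 *\<^sub>R u"
    using assms(2-4) by metis
  then have "k1 \<noteq> 0"
    using assms(5) by auto
  then have "p - x = (k2 / k1) *\<^sub>R (y - x)"
    using k1 k2 by simp
  then show ?thesis
    by (rule that)
qed

text \<open>The midpoint of an edge can be moved along any circulation living on the union of the two
  supports; staying on the edge forces that circulation to be parallel to the edge.\<close>

lemma skeleton_adj_circulation_parallel:
  assumes adj: "skeleton_adj (transport_polytope s t) x y"
    and c: "marginals c = 0" "c \<noteq> 0" "nonzeros c \<subseteq> supp x \<union> supp y"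
  shows "nonzeros (y - x) \<subseteq> nonzeros c"
proof -
  let ?P = "transport_polytope s t"
  obtain F where F: "F face_of ?P" "aff_dim F = 1" "x \<in> F" "y \<in> F" and "x \<noteq> y"
    using adj unfolding skeleton_adj_def by blast
  define q where "q = midpoint x y"
  have q_open: "q \<in> open_segment x y"
    using \<open>x \<noteq> y\<close> by (simp add: q_def midpoint_in_open_segment)
  moreover have "closed_segment x y \<subseteq> F"
    using face_of_imp_convex[OF F(1)] F(3,4) by (simp add: convex_contains_segment)
  ultimately have "q \<in> F"
    using open_closed_segment by blast
  then have qP: "q \<in> ?P"
    using F(1) face_of_imp_subset by blast
  have "supp q = supp x \<union> supp y"
    using supp_open_segment[OF _ _ q_open] F(1,3,4) face_of_imp_subset transport_polytope_nonneg
    by blast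
  then obtain \<epsilon> where "0 < \<epsilon>" "q + \<epsilon> *\<^sub>R c \<in> ?P" "q - \<epsilon> *\<^sub>R c \<in> ?P"
    using transport_polytope_perturb[OF qP c(1)] c(3) by blast
  then have "q + \<epsilon> *\<^sub>R c \<in> F"
    using face_ofD[OF F(1) in_open_segment_plus_minus[OF c(2)]] \<open>q \<in> F\<close> by blast
  then obtain r where r: "q + \<epsilon> *\<^sub>R c - x = r *\<^sub>R (y - x)"
    using aff_dim_1_diff_parallel[OF F(2,3,4) _ \<open>x \<noteq> y\<close>] by blast
  have half: "q - x = (1 / 2) *\<^sub>R (y - x)"
    by (simp add: q_def midpoint_def vec_eq_iff algebra_simps)
  have "\<epsilon> *\<^sub>R c = (q + \<epsilon> *\<^sub>R c - x) - (q - x)"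
    by simp
  also have "\<dots> = (r - 1 / 2) *\<^sub>R (y - x)"
    using r half by (metis scaleR_diff_left)
  finally have eps_c: "\<epsilon> *\<^sub>R c = (r - 1 / 2) *\<^sub>R (y - x)" .
  have "r - 1 / 2 \<noteq> 0"
  proof
    assume "r - 1 / 2 = 0"
    then have "\<epsilon> *\<^sub>R c = 0"
      using eps_c by simp
    then show False
      using c(2) \<open>0 < \<epsilon>\<close> by simp
  qed
  have "(\<epsilon> / (r - 1 / 2)) *\<^sub>R c = (1 / (r - 1 / 2)) *\<^sub>R (\<epsilon> *\<^sub>R c)"
    by simp
  also have "\<dots> = y - x"
    using \<open>r - 1 / 2 \<noteq> 0\<close> by (simp add: eps_c)
  finally show ?thesis
    using nonzeros_scaleR by metis
qed

lemma exchange_of_card_eq: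
  assumes "finite T" "T' \<subseteq> insert \<epsilon> T" "\<epsilon> \<in> T'" "\<epsilon> \<notin> T" "card T' = card T"
  obtains \<epsilon>' where "\<epsilon>' \<in> T" "\<epsilon>' \<noteq> \<epsilon>" "T' = insert \<epsilon> (T - {\<epsilon>'})"
proof -
  have "card (insert \<epsilon> T - T') = card (insert \<epsilon> T) - card T'"
    using assms by (intro card_Diff_subset) (auto intro: finite_subset)
  then have "card (insert \<epsilon> T - T') = 1"
    using assms by simp
  then obtain \<epsilon>' where K: "insert \<epsilon> T - T' = {\<epsilon>'}"
    by (rule card_1_singletonE)
  then have "\<epsilon>' \<in> T" "\<epsilon>' \<noteq> \<epsilon>"
    using assms(3) by auto
  moreover have "T' = insert \<epsilon> (T - {\<epsilon>'})"
    using K assms(2,3) by auto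
  ultimately show ?thesis
    by (rule that)
qed

lemma skeleton_adj_imp_exchange:
  fixes x y :: "real^('m::finite \<times> 'n::finite)"
  assumes adj: "skeleton_adj (transport_polytope s t) x y"
    and spanning: "card (supp x) + 1 = CARD('m + 'n)" "card (supp y) + 1 = CARD('m + 'n)"
  obtains \<epsilon> \<epsilon>' where "\<epsilon> \<notin> supp x" "\<epsilon>' \<in> supp x" "\<epsilon>' \<noteq> \<epsilon>"
    "supp y = insert \<epsilon> (supp x - {\<epsilon>'})"
proof -
  have "x \<in> vertices (transport_polytope s t)" "y \<in> vertices (transport_polytope s t)" "x \<noteq> y"
    using adj by (simp_all add: skeleton_adj_def)
  then have "supp x \<noteq> supp y"
    using inj_on_supp_vertices by (auto dest: inj_onD)
  then have "\<not> supp y \<subseteq> supp x"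
    using card_subset_eq[of "supp x" "supp y"] spanning by auto
  then obtain \<epsilon> where "\<epsilon> \<in> supp y" "\<epsilon> \<notin> supp x"
    by blast
  have "\<not> circulation_free (insert \<epsilon> (supp x))"
  proof
    assume "circulation_free (insert \<epsilon> (supp x))"
    then have "card (insert \<epsilon> (supp x)) < CARD('m + 'n)"
      by (rule circulation_free_card_less_CARD)
    then show False
      using spanning(1) \<open>\<epsilon> \<notin> supp x\<close> by simp
  qed
  then obtain c where c: "marginals c = 0" "c \<noteq> 0" "nonzeros c \<subseteq> insert \<epsilon> (supp x)"
    unfolding circulation_free_def by blast
  then have "nonzeros c \<subseteq> supp x \<union> supp y"
    using \<open>\<epsilon> \<in> supp y\<close> by blast
  then have diff: "nonzeros (y - x) \<subseteq> insert \<epsilon> (supp x)"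
    using skeleton_adj_circulation_parallel[OF adj c(1,2)] c(3) by blast
  have supp_y: "supp y \<subseteq> insert \<epsilon> (supp x)"
  proof
    fix e assume "e \<in> supp y"
    show "e \<in> insert \<epsilon> (supp x)"
    proof (cases "y$e = x$e")
      case True
      then show ?thesis
        using \<open>e \<in> supp y\<close> by (simp add: supp_def)
    next
      case False
      then show ?thesis
        using diff by (auto simp: nonzeros_def)
    qed
  qed
  obtain \<epsilon>' where "\<epsilon>' \<in> supp x" "\<epsilon>' \<noteq> \<epsilon>" "supp y = insert \<epsilon> (supp x - {\<epsilon>'})"
    by (rule exchange_of_card_eq[OF _ supp_y]) (use \<open>\<epsilon> \<in> supp y\<close> \<open>\<epsilon> \<notin> supp x\<close> spanning in simp_all)
  then show ?thesis
    by (rule that[OF \<open>\<epsilon> \<notin> supp x\<close>])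
qed

section \<open>Vertices of \<open>P_d\<close>\<close>

text \<open>Supplies are \<open>1\<close> and demands \<open>0\<close> modulo \<open>CARD('m)\<close>, so a vertex set that no support edge
  leaves contains a multiple of \<open>CARD('m)\<close> sources.\<close>

lemma P_d_closed_set_contains_sources:
  fixes x :: "real^('m::finite \<times> 'n::finite)"
  assumes x: "x \<in> P_d d" and "K \<noteq> {}"
    and closed: "\<And>u v. u \<in> K \<Longrightarrow> (u, v) \<in> adjrel (supp x) \<Longrightarrow> v \<in> K"
  shows "Inl \<mu> \<in> K"
proof -
  define A where "A = {a. Inl a \<in> K}"
  define B where "B = {b. Inr b \<in> K}"
  let ?m = "CARD('m)"
  have xP: "x \<in> transport_polytope (\<lambda>\<mu>. 1 + real ?m * real (d \<mu>)) (\<lambda>\<nu>. real ?m)"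
    using x by (simp add: P_d_def)
  have no_cross: "x$(a, b) = 0" if "a \<in> A \<longleftrightarrow> b \<notin> B" for a b
  proof (rule ccontr)
    assume "x$(a, b) \<noteq> 0"
    then have "(a, b) \<in> supp x"
      using transport_polytope_nonneg[OF xP, of "(a, b)"] by (simp add: supp_def)
    then have "(Inl a, Inr b) \<in> adjrel (supp x)" "(Inr b, Inl a) \<in> adjrel (supp x)"
      by (auto simp: adjrel_iff)
    then show False
      using that closed unfolding A_def B_def by blast
  qed
  have "(\<Sum>p\<in>A \<times> (- B). x$p) = 0" "(\<Sum>p\<in>(- A) \<times> B. x$p) = 0"
    using no_cross by (auto intro!: sum.neutral)
  then have "(\<Sum>a\<in>A. 1 + real ?m * real (d a)) - (\<Sum>b\<in>B. real ?m) = 0"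
    using margin_cut[of x _ _ A B] xP by (simp add: transport_polytope_iff)
  then have "real (card A + ?m * (\<Sum>a\<in>A. d a)) = real (?m * card B)"
    by (simp add: sum.distrib sum_distrib_left)
  then have eq: "card A + ?m * (\<Sum>a\<in>A. d a) = ?m * card B"
    by (simp only: of_nat_eq_iff)
  have "A \<noteq> {}"
  proof
    assume "A = {}"
    then have "B = {}"
      using eq by simp
    then show False
      using \<open>K \<noteq> {}\<close> \<open>A = {}\<close> unfolding A_def B_def by (metis Collect_empty_eq all_not_in_conv sum.exhaust)
  qed
  moreover have "?m dvd card A"
    using eq by (metis dvd_add_left_iff dvd_triv_left)
  ultimately have "?m \<le> card A"
    by (simp add: card_gt_0_iff dvd_imp_le)
  then have "A = UNIV"
    by (metis card_seteq finite top_greatest)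
  then show ?thesis
    unfolding A_def by blast
qed

lemma P_d_supp_connected:
  fixes x :: "real^('m::finite \<times> 'n::finite)"
  assumes x: "x \<in> P_d d"
  shows "connected_graph (supp x)"
  unfolding connected_graph_def
proof (rule ccontr)
  let ?R = "adjrel (supp x)"
  assume "\<not> (\<forall>u v. (u, v) \<in> ?R\<^sup>*)"
  then obtain u v where uv: "(u, v) \<notin> ?R\<^sup>*"
    by blast
  define K where "K = {w. (u, w) \<in> ?R\<^sup>*}"
  have "Inl undefined \<in> K"
    by (rule P_d_closed_set_contains_sources[OF x])
      (auto simp: K_def intro: rtrancl_into_rtrancl)
  moreover have "Inl undefined \<in> - K"
    by (rule P_d_closed_set_contains_sources[OF x])
      (use uv in \<open>auto simp: K_def intro: rtrancl_into_rtrancl adjrel_sym\<close>)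
  ultimately show False
    by simp
qed

lemma P_d_source_degree_ge:
  fixes x :: "real^('m::finite \<times> 'n::finite)"
  assumes x: "x \<in> P_d d"
  shows "1 + d \<mu> \<le> source_degree (supp x) \<mu>"
proof -
  let ?m = "CARD('m)"
  let ?N = "{\<nu>. (\<mu>, \<nu>) \<in> supp x}"
  have xP: "x \<in> transport_polytope (\<lambda>\<mu>. 1 + real ?m * real (d \<mu>)) (\<lambda>\<nu>. real ?m)"
    using x by (simp add: P_d_def)
  note nonneg = transport_polytope_nonneg[OF xP]
  have "x$(\<mu>, \<nu>) \<le> real ?m" for \<nu>
    using member_le_sum[of \<mu> UNIV "\<lambda>a. x$(a, \<nu>)"] nonneg xP
    by (simp add: transport_polytope_def)
  then have "(\<Sum>\<nu>\<in>?N. x$(\<mu>, \<nu>)) \<le> real ?m * real (card ?N)"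
    using sum_mono[of ?N "\<lambda>\<nu>. x$(\<mu>, \<nu>)" "\<lambda>_. real ?m"] by (simp add: mult.commute)
  moreover have "(\<Sum>\<nu>\<in>?N. x$(\<mu>, \<nu>)) = 1 + real ?m * real (d \<mu>)"
  proof -
    have "(\<Sum>\<nu>\<in>?N. x$(\<mu>, \<nu>)) = (\<Sum>\<nu>\<in>UNIV. x$(\<mu>, \<nu>))"
      by (rule sum.mono_neutral_left) (use nonneg in \<open>auto simp: supp_def less_le\<close>)
    then show ?thesis
      using xP by (simp add: transport_polytope_def)
  qed
  ultimately have "1 + real ?m * real (d \<mu>) \<le> real ?m * real (card ?N)"
    by simp
  then have "real (?m * d \<mu>) < real (?m * card ?N)"
    unfolding of_nat_mult by linarith
  then have "?m * d \<mu> < ?m * card ?N"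
    by (simp only: of_nat_less_iff)
  then have "d \<mu> < card ?N"
    by simp
  then show ?thesis
    by (simp add: source_degree_def)
qed

lemma sum_Suc_d_eq_card:
  fixes d :: "'m::finite \<Rightarrow> nat"
  assumes "CARD('n::finite) = 1 + (\<Sum>\<mu>\<in>UNIV. d \<mu>)"
  shows "(\<Sum>\<mu>\<in>UNIV. 1 + d \<mu>) + 1 = CARD('m + 'n)"
proof -
  have "(\<Sum>\<mu>\<in>UNIV. 1 + d \<mu>) = CARD('m) + (\<Sum>\<mu>\<in>UNIV. d \<mu>)"
    by (subst sum.distrib) simp
  then show ?thesis
    using assms by (simp add: card_UNIV_sum)
qed

lemma trees_d_card:
  fixes d :: "'m::finite \<Rightarrow> nat"
  assumes "CARD('n::finite) = 1 + (\<Sum>\<mu>\<in>UNIV. d \<mu>)" and "T \<in> (trees_d d :: ('m \<times> 'n) set set)"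
  shows "card T + 1 = CARD('m + 'n)"
  using assms sum_Suc_d_eq_card[OF assms(1)] card_eq_sum_source_degree[of T]
  by (simp add: trees_d_def)

lemma supp_vertex_in_trees_d:
  fixes d :: "'m::finite \<Rightarrow> nat"
  assumes card: "CARD('n::finite) = 1 + (\<Sum>\<mu>\<in>UNIV. d \<mu>)"
    and x: "x \<in> vertices (P_d d :: (real^('m \<times> 'n)) set)"
  shows "supp x \<in> trees_d d"
proof -
  have xP: "x \<in> P_d d" and free: "circulation_free (supp x)"
    using x by (simp_all add: P_d_def vertices_transport_polytope_iff)
  have "card (supp x) < CARD('m + 'n)"
    by (rule circulation_free_card_less_CARD[OF free])
  then have "(\<Sum>\<mu>\<in>UNIV. source_degree (supp x) \<mu>) \<le> (\<Sum>\<mu>\<in>UNIV. 1 + d \<mu>)"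
    using sum_Suc_d_eq_card[OF card] card_eq_sum_source_degree[of "supp x"] by simp
  moreover have "(\<Sum>\<mu>\<in>UNIV. 1 + d \<mu>) \<le> (\<Sum>\<mu>\<in>UNIV. source_degree (supp x) \<mu>)"
    by (rule sum_mono) (rule P_d_source_degree_ge[OF xP])
  ultimately have "(\<Sum>\<mu>\<in>UNIV. 1 + d \<mu>) = (\<Sum>\<mu>\<in>UNIV. source_degree (supp x) \<mu>)"
    by linarith
  then have "1 + d \<mu> = source_degree (supp x) \<mu>" for \<mu>
    by (rule sum_mono_inv) (use P_d_source_degree_ge[OF xP] in simp_all)
  moreover have "acyclic_graph (supp x)"
    using free by (simp add: acyclic_graph_iff_circulation_free)
  ultimately show ?thesis
    using P_d_supp_connected[OF xP] by (simp add: trees_d_def spanning_tree_def eq_commute)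
qed

lemma trees_d_side_card:
  fixes d :: "'m::finite \<Rightarrow> nat"
  assumes card: "CARD('n::finite) = 1 + (\<Sum>\<mu>\<in>UNIV. d \<mu>)" and T: "T \<in> (trees_d d :: ('m \<times> 'n) set set)"
    and e: "e \<in> T" and closed: "\<And>p. p \<in> T - {e} \<Longrightarrow> Inl (fst p) \<in> C \<longleftrightarrow> Inr (snd p) \<in> C"
    and sides: "Inr (snd e) \<in> C" "Inl (fst e) \<notin> C"
  shows "card {b. Inr b \<in> C} = (\<Sum>a | Inl a \<in> C. d a) + 1"
proof -
  define A B where "A = {a. Inl a \<in> C}" and "B = {b. Inr b \<in> C}"
  have free: "circulation_free T"
    using T by (simp add: trees_d_def spanning_tree_def acyclic_graph_iff_circulation_free)
  have "{p \<in> T. Inl (fst p) \<in> C} = Sigma A (\<lambda>a. {b. (a, b) \<in> T})"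
    by (auto simp: A_def)
  then have "card {p \<in> T. Inl (fst p) \<in> C} = (\<Sum>a\<in>A. 1 + d a)"
    using T by (simp add: card_SigmaI trees_d_def flip: source_degree_def)
  also have "\<dots> = card A + (\<Sum>a\<in>A. d a)"
    by (subst sum.distrib) simp
  finally have "card A + (\<Sum>a\<in>A. d a) + 1 = card C"
    using tree_Diff_edge_component_card[OF free trees_d_card[OF card T] e closed sides] by simp
  moreover have "C = A <+> B"
  proof (rule set_eqI)
    show "w \<in> C \<longleftrightarrow> w \<in> A <+> B" for w
      by (cases w) (auto simp: A_def B_def)
  qed
  then have "card C = card A + card B"
    by (simp add: card_Plus)
  ultimately show ?thesis
    by (simp add: A_def B_def)
qed

text \<open>Cut the tree at \<open>(\<mu>, \<nu>)\<close>: conservation across the cut gives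
  \<open>z$(\<mu>, \<nu>) = CARD('m) - card A\<close> for the sources \<open>A\<close> on the side of \<open>\<nu>\<close>, and \<open>\<mu> \<notin> A\<close>.\<close>

lemma trees_d_flow_positive:
  fixes d :: "'m::finite \<Rightarrow> nat"
  assumes card: "CARD('n::finite) = 1 + (\<Sum>\<mu>\<in>UNIV. d \<mu>)" and T: "T \<in> (trees_d d :: ('m \<times> 'n) set set)"
    and z: "nonzeros z \<subseteq> T"
      "marginals z = margin_vector (\<lambda>\<mu>. 1 + real CARD('m) * real (d \<mu>)) (\<lambda>\<nu>. real CARD('m))"
    and e: "(\<mu>, \<nu>) \<in> T"
  shows "0 < z$(\<mu>, \<nu>)"
proof -
  let ?m = "CARD('m)"
  let ?R = "adjrel (T - {(\<mu>, \<nu>)})"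
  define C where "C = {w. (Inr \<nu>, w) \<in> ?R\<^sup>*}"
  define A B where "A = {a. Inl a \<in> C}" and "B = {b. Inr b \<in> C}"
  have closed: "Inl a \<in> C \<longleftrightarrow> Inr b \<in> C" if "(a, b) \<in> T - {(\<mu>, \<nu>)}" for a b
  proof -
    have "(Inl a, Inr b) \<in> ?R" "(Inr b, Inl a) \<in> ?R"
      using that by (auto simp: adjrel_iff)
    then show ?thesis
      unfolding C_def by (blast intro: rtrancl_into_rtrancl)
  qed
  have "\<nu> \<in> B" "\<mu> \<notin> A"
    using acyclic_Diff_edge_disconnects[of T \<mu> \<nu>] T e
    by (auto simp: trees_d_def spanning_tree_def A_def B_def C_def)
  have card_B: "card B = (\<Sum>a\<in>A. d a) + 1"
    unfolding A_def B_def
  proof (rule trees_d_side_card[OF card T e])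
    show "Inl (fst p) \<in> C \<longleftrightarrow> Inr (snd p) \<in> C" if "p \<in> T - {(\<mu>, \<nu>)}" for p
      using closed[of "fst p" "snd p"] that by simp
  qed (use \<open>\<nu> \<in> B\<close> \<open>\<mu> \<notin> A\<close> in \<open>simp_all add: A_def B_def\<close>)
  have "z$(\<mu>, \<nu>) = (\<Sum>b\<in>B. real ?m) - (\<Sum>a\<in>A. 1 + real ?m * real (d a))"
  proof (rule margin_cut_single_edge[OF z(2) \<open>\<mu> \<notin> A\<close> \<open>\<nu> \<in> B\<close>])
    fix a b assume cross: "a \<in> A \<longleftrightarrow> b \<notin> B" and "(a, b) \<noteq> (\<mu>, \<nu>)"
    show "z$(a, b) = 0"
    proof (rule ccontr)
      assume "z$(a, b) \<noteq> 0"
      then have "(a, b) \<in> T - {(\<mu>, \<nu>)}"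
        using z(1) \<open>(a, b) \<noteq> (\<mu>, \<nu>)\<close> by (auto simp: nonzeros_def)
      then show False
        using closed cross by (simp add: A_def B_def)
    qed
  qed
  also have "\<dots> = real ?m - real (card A)"
    using card_B by (simp add: sum.distrib algebra_simps flip: sum_distrib_left)
  finally have "z$(\<mu>, \<nu>) = real ?m - real (card A)" .
  moreover have "card A < ?m"
    using \<open>\<mu> \<notin> A\<close> by (metis UNIV_I finite psubsetI psubset_card_mono subset_UNIV)
  ultimately show ?thesis
    by simp
qed

lemma trees_d_in_supp_vertices:
  fixes d :: "'m::finite \<Rightarrow> nat"
  assumes card: "CARD('n::finite) = 1 + (\<Sum>\<mu>\<in>UNIV. d \<mu>)" and T: "T \<in> (trees_d d :: ('m \<times> 'n) set set)"
  shows "T \<in> supp ` vertices (P_d d :: (real^('m \<times> 'n)) set)"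
proof -
  let ?s = "\<lambda>\<mu>. 1 + real CARD('m) * real (d \<mu>)"
  let ?t = "\<lambda>\<nu>::'n. real CARD('m)"
  have free: "circulation_free T"
    using T by (simp add: trees_d_def spanning_tree_def acyclic_graph_iff_circulation_free)
  have "(\<Sum>\<mu>\<in>UNIV. ?s \<mu>) = (\<Sum>\<nu>\<in>UNIV. ?t \<nu>)"
    using card by (simp add: sum.distrib algebra_simps flip: sum_distrib_left)
  then obtain z where z: "nonzeros z \<subseteq> T" "marginals z = margin_vector ?s ?t"
    using circulation_free_marginals_onto[OF free trees_d_card[OF card T]]
    by (metis margin_vector_balanced)
  have pos: "0 < z$e" if "e \<in> T" for e
    using trees_d_flow_positive[OF card T z] that by (cases e) auto
  have zero: "z$e = 0" if "e \<notin> T" for e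
    using z(1) that by (auto simp: nonzeros_def)
  have "supp z = T"
    using pos zero by (force simp: supp_def)
  moreover have "\<forall>e. 0 \<le> z$e"
    using pos zero by (metis less_eq_real_def)
  ultimately have "z \<in> vertices (P_d d)"
    using z(2) free by (simp add: P_d_def vertices_transport_polytope_iff transport_polytope_iff)
  then show ?thesis
    using \<open>supp z = T\<close> by blast
qed

section \<open>Edges of \<open>P_d\<close>\<close>

lemma pivot_imp_exchange:
  assumes "pivot T T'"
  obtains \<epsilon> \<epsilon>' where "\<epsilon> \<notin> T" "\<epsilon>' \<in> T" "\<epsilon>' \<noteq> \<epsilon>" "T' = insert \<epsilon> (T - {\<epsilon>'})"
  using assms cycle_edges_subset unfolding pivot_def by blast

lemma exchange_same_source:
  fixes T T' :: "('m \<times> 'n::finite) set"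
  assumes "\<And>\<mu>. source_degree T' \<mu> = source_degree T \<mu>"
    and "\<epsilon> \<notin> T" "T' = insert \<epsilon> (T - {\<epsilon>'})"
  shows "fst \<epsilon>' = fst \<epsilon>"
proof (rule ccontr)
  assume "fst \<epsilon>' \<noteq> fst \<epsilon>"
  then have "{\<nu>. (fst \<epsilon>, \<nu>) \<in> T'} = insert (snd \<epsilon>) {\<nu>. (fst \<epsilon>, \<nu>) \<in> T}"
    using assms(3) by (cases \<epsilon>) auto
  moreover have "snd \<epsilon> \<notin> {\<nu>. (fst \<epsilon>, \<nu>) \<in> T}"
    using assms(2) by simp
  ultimately have "source_degree T' (fst \<epsilon>) = Suc (source_degree T (fst \<epsilon>))"
    by (simp add: source_degree_def)
  then show False
    using assms(1) by simp
qed

lemma trees_d_exchange_imp_pivot: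
  fixes d :: "'m::finite \<Rightarrow> nat"
  assumes card: "CARD('n::finite) = 1 + (\<Sum>\<mu>\<in>UNIV. d \<mu>)"
    and T: "T \<in> (trees_d d :: ('m \<times> 'n) set set)" "T' \<in> trees_d d"
    and "\<epsilon> \<notin> T" "\<epsilon>' \<in> T" "\<epsilon>' \<noteq> \<epsilon>" and T': "T' = insert \<epsilon> (T - {\<epsilon>'})"
  shows "pivot T T'"
proof -
  have acyclic: "acyclic_graph T" "acyclic_graph T'"
    using T by (simp_all add: trees_d_def spanning_tree_def)
  have "fst \<epsilon>' = fst \<epsilon>"
    using T T' \<open>\<epsilon> \<notin> T\<close> by (intro exchange_same_source) (simp_all add: trees_d_def)
  have "\<not> circulation_free (insert \<epsilon> T)"
  proof
    assume "circulation_free (insert \<epsilon> T)"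
    then have "card (insert \<epsilon> T) < CARD('m + 'n)"
      by (rule circulation_free_card_less_CARD)
    then show False
      using trees_d_card[OF card T(1)] \<open>\<epsilon> \<notin> T\<close> by simp
  qed
  then obtain c where c: "marginals c = 0" "c \<noteq> 0" "nonzeros c \<subseteq> insert \<epsilon> T"
    unfolding circulation_free_def by blast
  then obtain vs where cycle: "is_cycle (nonzeros c) vs"
    using circulation_has_cycle by blast
  have "nonzeros c \<subseteq> insert \<epsilon>' T'"
    using c(3) T' by blast
  then have "\<epsilon>' \<in> cycle_edges (nonzeros c) vs"
    by (rule cycle_through_added_edge[OF cycle _ acyclic(2)])
  moreover have "\<epsilon> \<in> cycle_edges (nonzeros c) vs"
    by (rule cycle_through_added_edge[OF cycle c(3) acyclic(1)])
  ultimately have "\<epsilon> \<in> cycle_edges (insert \<epsilon> T) vs" "\<epsilon>' \<in> cycle_edges (insert \<epsilon> T) vs"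
    using cycle_edges_mono \<open>\<epsilon>' \<in> T\<close> by blast+
  moreover have "is_cycle (insert \<epsilon> T) vs"
    using is_cycle_mono[OF cycle c(3)] .
  ultimately show ?thesis
    unfolding pivot_def using \<open>\<epsilon> \<notin> T\<close> \<open>\<epsilon>' \<noteq> \<epsilon>\<close> \<open>fst \<epsilon>' = fst \<epsilon>\<close> T'
    by (intro exI[of _ \<epsilon>] exI[of _ \<epsilon>'] exI[of _ vs]) simp
qed

lemma skeleton_adj_imp_pivot:
  fixes d :: "'m::finite \<Rightarrow> nat"
  assumes card: "CARD('n::finite) = 1 + (\<Sum>\<mu>\<in>UNIV. d \<mu>)"
    and adj: "skeleton_adj (P_d d :: (real^('m \<times> 'n)) set) x y"
  shows "pivot (supp x) (supp y)"
proof -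
  have trees: "supp x \<in> trees_d d" "supp y \<in> trees_d d"
    using adj supp_vertex_in_trees_d[OF card] by (simp_all add: skeleton_adj_def)
  obtain \<epsilon> \<epsilon>' where "\<epsilon> \<notin> supp x" "\<epsilon>' \<in> supp x" "\<epsilon>' \<noteq> \<epsilon>" "supp y = insert \<epsilon> (supp x - {\<epsilon>'})"
    by (rule skeleton_adj_imp_exchange[OF adj[unfolded P_d_def]
          trees_d_card[OF card trees(1)] trees_d_card[OF card trees(2)]])
  then show ?thesis
    by (rule trees_d_exchange_imp_pivot[OF card trees])
qed

lemma skeleton_adj_iff_pivot_adj:
  fixes d :: "'m::finite \<Rightarrow> nat"
  assumes card: "CARD('n::finite) = 1 + (\<Sum>\<mu>\<in>UNIV. d \<mu>)"
    and x: "x \<in> vertices (P_d d :: (real^('m \<times> 'n)) set)" and y: "y \<in> vertices (P_d d)"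
  shows "skeleton_adj (P_d d) x y \<longleftrightarrow> pivot_adj d (supp x) (supp y)"
proof
  assume "skeleton_adj (P_d d) x y"
  then have "pivot (supp x) (supp y)"
    by (rule skeleton_adj_imp_pivot[OF card])
  then show "pivot_adj d (supp x) (supp y)"
    using supp_vertex_in_trees_d[OF card] x y by (simp add: pivot_adj_def)
next
  have exchange: "skeleton_adj (P_d d) u v"
    if "u \<in> vertices (P_d d)" "v \<in> vertices (P_d d)" "pivot (supp u) (supp v)" for u v
    using that(3) by (rule pivot_imp_exchange) (use that(1,2) exchange_imp_skeleton_adj in \<open>simp add: P_d_def\<close>)
  assume "pivot_adj d (supp x) (supp y)"
  then show "skeleton_adj (P_d d) x y"
    using exchange[OF x y] exchange[OF y x] by (auto simp: pivot_adj_def skeleton_adj_def)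
qed

theorem lemma4p2:
  fixes d :: "'m::finite \<Rightarrow> nat"
  assumes "CARD('n::finite) = 1 + (\<Sum>\<mu>\<in>UNIV. d \<mu>)"
  shows "bij_betw supp (vertices (P_d d :: (real ^ ('m \<times> 'n)) set)) (trees_d d)
    \<and> (\<forall>x \<in> vertices (P_d d :: (real ^ ('m \<times> 'n)) set). \<forall>y \<in> vertices (P_d d).
         skeleton_adj (P_d d) x y \<longleftrightarrow> pivot_adj d (supp x) (supp y))"
proof
  have "supp ` vertices (P_d d :: (real ^ ('m \<times> 'n)) set) = trees_d d"
    using supp_vertex_in_trees_d[OF assms] trees_d_in_supp_vertices[OF assms] by blast
  then show "bij_betw supp (vertices (P_d d :: (real ^ ('m \<times> 'n)) set)) (trees_d d)"
    using inj_on_supp_vertices by (simp add: bij_betw_def P_d_def)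
  show "\<forall>x \<in> vertices (P_d d :: (real ^ ('m \<times> 'n)) set). \<forall>y \<in> vertices (P_d d).
      skeleton_adj (P_d d) x y \<longleftrightarrow> pivot_adj d (supp x) (supp y)"
    using skeleton_adj_iff_pivot_adj[OF assms] by blast
qed

end
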